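(* Let $f\not\equiv0$ be given by a Taylor series $f(z)=\sum_{k\ge0}a_kz^k$ with radius of convergence $R\in(0,\infty]$, and let $a_{n_0}$ be its first non-zero coefficient. Then for every $n>n_0$, $\kappa(n,r)\to\infty$ as $r\to0$; but $\kappa(n_0,r)\to1$ as $r\to 0$.
   Context: For $0<r<R$, $M_1(r)=\frac{1}{2\pi}\int_0^{2\pi}|f(re^{i\theta})|\,d\theta$ and $\kappa(n,r)=\dfrac{M_1(r)}{|a_n|r^n}$, with the convention $\kappa(n,r)=+\infty$ if $a_n=0$. *)

theory Defs
  imports "HOL-Analysis.Analysis"
begin

definition taylor_fun :: "(nat \<Rightarrow> complex) \<Rightarrow> complex \<Rightarrow> complex" where
  "taylor_fun a z = (\<Sum>k. a k * z ^ k)"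

definition M1 :: "(complex \<Rightarrow> complex) \<Rightarrow> real \<Rightarrow> real" where
  "M1 f r = integral {0..2*pi} (\<lambda>\<theta>. cmod (f (complex_of_real r * cis \<theta>))) / (2*pi)"

definition kappa :: "(nat \<Rightarrow> complex) \<Rightarrow> nat \<Rightarrow> real \<Rightarrow> ereal" where
  "kappa a n r = (if a n = 0 then \<infinity>
     else ereal (M1 (taylor_fun a) r / (cmod (a n) * r ^ n)))"

end

theory Submission
  imports Defs
begin

text \<open>Near 0 write f(z) = z^n0 g(z) with g continuous and g(0) = a n0. Then M1 f r = r^n0 M1 g r,
  and the circle mean M1 g r tends to |g(0)| = |a n0| as r \<rightarrow> 0 by continuity of g. So
  M1 f r / (|a n| r^n) behaves like |a n0| / (|a n| r^(n - n0)), which tends to \<infinity> for n > n0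
  and to 1 for n = n0.\<close>

lemma taylor_fun_eq_power_mult_shift:
  fixes a :: "nat \<Rightarrow> complex"
  assumes zero: "\<forall>k<n. a k = 0" and z: "ereal (norm z) < conv_radius a"
  shows "taylor_fun a z = z ^ n * taylor_fun (\<lambda>k. a (k + n)) z"
proof -
  have "ereal (norm z) < conv_radius (\<lambda>k. a (k + n))"
    using z by (simp add: conv_radius_shift)
  then have "(\<lambda>k. a (k + n) * z ^ k) sums taylor_fun (\<lambda>k. a (k + n)) z"
    unfolding taylor_fun_def by (intro summable_sums summable_in_conv_radius)
  then have "(\<lambda>k. a (k + n) * z ^ (k + n)) sums (taylor_fun (\<lambda>k. a (k + n)) z * z ^ n)"
    by (auto dest: sums_mult2 simp: power_add mult.assoc)
  then have "(\<lambda>k. a k * z ^ k) sums (taylor_fun (\<lambda>k. a (k + n)) z * z ^ n)"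
    using sums_iff_shift[of "\<lambda>k. a k * z ^ k" n] zero by simp
  then show ?thesis
    unfolding taylor_fun_def by (simp add: sums_iff mult.commute)
qed

lemma M1_power_mult:
  assumes "\<And>z. norm z = r \<Longrightarrow> f z = z ^ n * g z" and "0 \<le> r"
  shows "M1 f r = r ^ n * M1 g r"
proof -
  have "cmod (f (complex_of_real r * cis \<theta>)) = r ^ n * cmod (g (complex_of_real r * cis \<theta>))" for \<theta>
    using assms by (simp add: norm_mult norm_power)
  then show ?thesis
    unfolding M1_def by simp
qed

lemma M1_near_const:
  assumes int: "(\<lambda>\<theta>. cmod (g (complex_of_real r * cis \<theta>))) integrable_on {0..2*pi}"
    and close: "\<And>\<theta>. \<bar>cmod (g (complex_of_real r * cis \<theta>)) - c\<bar> \<le> e"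
  shows "\<bar>M1 g r - c\<bar> \<le> e"
proof -
  let ?h = "\<lambda>\<theta>. cmod (g (complex_of_real r * cis \<theta>))"
  have "?h \<theta> \<le> c + e" and "c - e \<le> ?h \<theta>" for \<theta>
    using close[of \<theta>] by linarith+
  then have "integral {0..2*pi} ?h \<le> integral {0..2*pi} (\<lambda>_. c + e)"
    and "integral {0..2*pi} (\<lambda>_. c - e) \<le> integral {0..2*pi} ?h"
    by (intro integral_le int integrable_const_ivl; simp)+
  then have "\<bar>integral {0..2*pi} ?h - 2*pi * c\<bar> \<le> 2*pi * e"
    by (simp add: abs_le_iff algebra_simps)
  moreover have "M1 g r - c = (integral {0..2*pi} ?h - 2*pi * c) / (2*pi)"
    unfolding M1_def by (simp add: field_simps)
  ultimately show ?thesis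
    by (simp add: abs_divide divide_le_eq mult.commute)
qed

lemma M1_tendsto_norm_center:
  assumes cont: "continuous_on (cball 0 \<rho>) g" and "0 < \<rho>"
  shows "(M1 g \<longlongrightarrow> cmod (g 0)) (at_right 0)"
proof (rule tendstoI)
  fix e :: real assume "e > 0"
  then obtain d where "d > 0" and d: "\<And>z. z \<in> cball 0 \<rho> \<Longrightarrow> norm z < d \<Longrightarrow> dist (g z) (g 0) < e/2"
    using cont[unfolded continuous_on_iff] \<open>0 < \<rho>\<close>
    by (metis centre_in_cball dist_0_norm dist_commute half_gt_zero less_eq_real_def)
  have "eventually (\<lambda>r::real. 0 < r \<and> r < min d \<rho>) (at_right 0)"
    using eventually_at_right_real[of 0 "min d \<rho>"] \<open>d > 0\<close> \<open>0 < \<rho>\<close> by simp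
  then show "eventually (\<lambda>r. dist (M1 g r) (cmod (g 0)) < e) (at_right 0)"
  proof (rule eventually_mono)
    fix r :: real assume r: "0 < r \<and> r < min d \<rho>"
    have circle: "(\<lambda>\<theta>. complex_of_real r * cis \<theta>) ` {0..2*pi} \<subseteq> cball 0 \<rho>"
      using r by (auto simp: norm_mult)
    have "continuous_on {0..2*pi} (\<lambda>\<theta>. cmod (g (complex_of_real r * cis \<theta>)))"
      by (intro continuous_intros continuous_on_compose2[OF cont _ circle])
    then have "\<bar>M1 g r - cmod (g 0)\<bar> \<le> e/2"
    proof (intro M1_near_const integrable_continuous_real)
      fix \<theta>
      have "dist (g (complex_of_real r * cis \<theta>)) (g 0) < e/2"
        using r by (intro d) (auto simp: norm_mult)
      then show "\<bar>cmod (g (complex_of_real r * cis \<theta>)) - cmod (g 0)\<bar> \<le> e/2"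
        using norm_triangle_ineq3 by (smt (verit) dist_norm)
    qed
    then show "dist (M1 g r) (cmod (g 0)) < e"
      using \<open>e > 0\<close> by (simp add: dist_real_def)
  qed
qed

lemma M1_taylor_fun_div_power_tendsto:
  fixes a :: "nat \<Rightarrow> complex"
  assumes R: "conv_radius a > 0" and zero: "\<forall>k<n0. a k = 0"
  shows "((\<lambda>r. M1 (taylor_fun a) r / r ^ n0) \<longlongrightarrow> cmod (a n0)) (at_right 0)"
proof -
  define b where "b = (\<lambda>k. a (k + n0))"
  obtain \<rho> :: real where "0 < \<rho>" and \<rho>: "ereal \<rho> < conv_radius a"
    using ereal_dense2[OF R] by (metis ereal_less(2) less_ereal.simps(1) zero_ereal_def)
  have "continuous_on (cball 0 \<rho>) (taylor_fun b)"
    using powser_continuous_suminf[of \<rho> b 0] \<rho> unfolding taylor_fun_def b_def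
    by (simp add: conv_radius_shift)
  moreover have "taylor_fun b 0 = a n0"
    by (simp add: taylor_fun_def b_def)
  ultimately have "(M1 (taylor_fun b) \<longlongrightarrow> cmod (a n0)) (at_right 0)"
    using M1_tendsto_norm_center[OF _ \<open>0 < \<rho>\<close>] by metis
  moreover have "eventually (\<lambda>r. M1 (taylor_fun b) r = M1 (taylor_fun a) r / r ^ n0) (at_right 0)"
    using eventually_at_right_real[OF \<open>0 < \<rho>\<close>]
  proof (rule eventually_mono)
    fix r :: real assume r: "r \<in> {0<..<\<rho>}"
    have "M1 (taylor_fun a) r = r ^ n0 * M1 (taylor_fun b) r"
    proof (rule M1_power_mult)
      fix z :: complex assume "norm z = r"
      then have "ereal (norm z) < conv_radius a"
        using r \<rho> by (metis greaterThanLessThan_iff less_ereal.simps(1) order.strict_trans)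
      then show "taylor_fun a z = z ^ n0 * taylor_fun b z"
        unfolding b_def by (rule taylor_fun_eq_power_mult_shift[OF zero])
    qed (use r in auto)
    then show "M1 (taylor_fun b) r = M1 (taylor_fun a) r / r ^ n0"
      using r by simp
  qed
  ultimately show ?thesis
    by (rule Lim_transform_eventually)
qed

lemma tendsto_pos_div_power_at_top:
  fixes h :: "real \<Rightarrow> real"
  assumes h: "(h \<longlongrightarrow> c) (at_right 0)" and "0 < c" and "0 < m"
  shows "LIM r at_right 0. h r / r ^ m :> at_top"
proof -
  have pos: "eventually (\<lambda>r::real. 0 < r) (at_right 0)"
    by (simp add: eventually_at_right_less)
  have "((\<lambda>r::real. r ^ m) \<longlongrightarrow> 0) (at_right 0)"
    using tendsto_power[OF tendsto_ident_at[of 0 "{0<..}"], of m] \<open>0 < m\<close> by simp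
  then have "LIM r at_right 0. inverse (r ^ m :: real) :> at_top"
    by (rule filterlim_inverse_at_top) (use pos in \<open>auto elim: eventually_mono\<close>)
  then show ?thesis
    using filterlim_tendsto_pos_mult_at_top[OF h \<open>0 < c\<close>] by (simp add: divide_inverse)
qed

theorem theorem4p3:
  fixes a :: "nat \<Rightarrow> complex" and n0 :: nat
  assumes "conv_radius a > 0"
    and "a n0 \<noteq> 0"
    and "\<forall>k<n0. a k = 0"
  shows "(\<forall>n>n0. ((\<lambda>r. kappa a n r) \<longlongrightarrow> \<infinity>) (at_right (0::real)))
       \<and> ((\<lambda>r. kappa a n0 r) \<longlongrightarrow> 1) (at_right (0::real))"
proof -
  let ?q = "\<lambda>r. M1 (taylor_fun a) r / r ^ n0"
  have lim: "(?q \<longlongrightarrow> cmod (a n0)) (at_right 0)"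
    using M1_taylor_fun_div_power_tendsto assms(1,3) .
  have "((\<lambda>r. kappa a n r) \<longlongrightarrow> \<infinity>) (at_right 0)" if "n > n0" for n
  proof (cases "a n = 0")
    case False
    have "((\<lambda>r. ?q r / cmod (a n)) \<longlongrightarrow> cmod (a n0) / cmod (a n)) (at_right 0)"
      using False by (intro tendsto_divide lim) auto
    then have "LIM r at_right 0. ?q r / cmod (a n) / r ^ (n - n0) :> at_top"
      using that False assms(2) by (intro tendsto_pos_div_power_at_top) auto
    moreover have "(\<lambda>r. ?q r / cmod (a n) / r ^ (n - n0)) = (\<lambda>r. M1 (taylor_fun a) r / (cmod (a n) * r ^ n))"
      using \<open>n > n0\<close> by (simp add: fun_eq_iff divide_divide_eq_left power_add[symmetric] mult_ac)
    ultimately show ?thesis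
      using False by (simp only:) (simp add: kappa_def tendsto_PInfty_eq_at_top)
  qed (simp add: kappa_def)
  moreover have "((\<lambda>r. ?q r / cmod (a n0)) \<longlongrightarrow> cmod (a n0) / cmod (a n0)) (at_right 0)"
    using assms(2) by (intro tendsto_divide lim) auto
  then have "((\<lambda>r. ereal (?q r / cmod (a n0))) \<longlongrightarrow> ereal 1) (at_right 0)"
    using assms(2) by (intro tendsto_ereal) simp
  ultimately show ?thesis
    using assms(2) by (auto simp: kappa_def one_ereal_def mult.commute)
qed

end
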